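(* Assume (A.3). Then there is a finite constant $C_r>0$, independent of $h$, such that for all sufficiently small $h$, $r^2(\hat y_h,\hat u_h)\le C_rh^{2\lambda\eta}$.
   Context: Let $T>0$. $\mathcal{X}$: pairs $(y,u)$ with $y:[0,T]\to\mathbb{R}^{n_y}$, $y\in L^\infty$, $\dot y\in L^2$, $u\in L^\infty([0,T];\mathbb{R}^{n_u})$; $\|(y,u)\|_{\mathcal{X}}=\|\dot y\|_{L^2}+\operatorname{ess\,sup}_t\|(y(t),u(t))\|_\infty$, where $\|\dot y\|_{L^2}=(\int_0^T\|\dot y\|_2^2dt)^{1/2}$. Given $M,b$ on $\mathbb{R}^{n_y}\times\mathbb{R}^{n_y}$ (values in $\mathbb{R}$, $\mathbb{R}^{n_b}$), $f_1,f_2$ on $\mathbb{R}^{n_y}\times\mathbb{R}^{n_u}\times[0,T]$ (values in $\mathbb{R}^{n_y}$, $\mathbb{R}^{n_c}$) and bounds $y_L\le y_R$, $u_L\le u_R$, the optimal control problem minimizes $M(y(0),y(T))$ over $\mathcal{X}$ subject to $b(y(0),y(T))=0$, $\dot y=f_1(y,u,t)$ and $f_2(y,u,t)=0$ a.e., and the bounds for all $t$; $(y^\star,u^\star)$ is a local minimizer. $f(\dot y,y,u,t)=(f_1(y,u,t)-\dot y,f_2(y,u,t))$, $r(y,u)=(\int_0^T\|f(\dot y(t),y(t),u(t),t)\|_2^2dt+\|b(y(0),y(T))\|_2^2)^{1/2}$. Mesh $0=t_1<\dots<t_{N+1}=T$, $h=\max_i(t_{i+1}-t_i)$, degree $p$;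 $\mathcal{X}_{h,p}$: $y_h$ continuous and polynomial of degree $\le p$ on each mesh interval, $u_h$ polynomial of degree $\le p-1$ on each mesh interval; $\mathcal{B}_{h,p}\subset\mathcal{X}_{h,p}$ the pairs satisfying the bounds at the sampling points. (Approximability) there are $h_0,\eta,C_\eta>0$ such that for all $h\le h_0$ there is $(y_h,u_h)\in\mathcal{B}_{h,p}$ with $\|(y^\star,u^\star)-(y_h,u_h)\|_{\mathcal{X}}\le C_\eta h^\eta$; $(\hat y_h,\hat u_h)$ denotes a fixed such pair. (A.3): there are $\lambda\in(0,1]$, $C_\lambda>0$, $\epsilon>0$ with $|M(y^\star(0),y^\star(T))-M(a,a')|\le C_\lambda\|(y^\star(0)-a,y^\star(T)-a')\|_2^\lambda$ and $\|b(y^\star(0),y^\star(T))-b(a,a')\|_2\le C_\lambda\|(y^\star(0)-a,y^\star(T)-a')\|_2^\lambda$ whenever $\|(y^\star(0)-a,y^\star(T)-a')\|_2\le\epsilon$, and for each $t$, $\|(f_1(y^\star(t),u^\star(t),t)-f_1(v,w,t),f_2(y^\star(t),u^\star(t),t)-f_2(v,w,t))\|_2\le C_\lambda\|(y^\star(t)-v,u^\star(t)-w)\|_2^\lambda$ whenever $\|(y^\star(t)-v,u^\star(t)-w)\|_2\le\epsilon$. *)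

theory Defs
  imports "HOL-Analysis.Analysis" "HOL-Probability.Probability"
begin

text \<open>Functions on [0,T] are modelled as total functions real \<Rightarrow> real^'n; only values on
 {0..T} matter. The time derivative of y is carried as a separate function y'
 (weak derivative), linked to y by absolute continuity.\<close>

definition L2sq :: "real \<Rightarrow> (real \<Rightarrow> 'a::real_normed_vector) \<Rightarrow> ennreal" where
  "L2sq T v = (\<integral>\<^sup>+ t\<in>{0..T}. ennreal ((norm (v t))\<^sup>2) \<partial>lborel)"

definition L2norm :: "real \<Rightarrow> (real \<Rightarrow> 'a::real_normed_vector) \<Rightarrow> ereal" where
  "L2norm T v = (if L2sq T v = \<infinity> then \<infinity> else ereal (sqrt (enn2real (L2sq T v))))"

definition Linf_yu :: "real \<Rightarrow> (real \<Rightarrow> real^'ny) \<Rightarrow> (real \<Rightarrow> real^'nu) \<Rightarrow> ereal" where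
  "Linf_yu T y u = esssup (restrict_space lborel {0..T}) (\<lambda>t. ereal (infnorm (y t, u t)))"

definition Xnorm :: "real \<Rightarrow> (real \<Rightarrow> real^'ny) \<Rightarrow> (real \<Rightarrow> real^'ny) \<Rightarrow> (real \<Rightarrow> real^'nu) \<Rightarrow> ereal" where
  "Xnorm T y y' u = L2norm T y' + Linf_yu T y u"

definition weak_deriv :: "real \<Rightarrow> (real \<Rightarrow> real^'n) \<Rightarrow> (real \<Rightarrow> real^'n) \<Rightarrow> bool" where
  "weak_deriv T y y' \<longleftrightarrow>
     y' \<in> borel_measurable (restrict_space lborel {0..T}) \<and> L2sq T y' < \<infinity> \<and>
     (\<forall>t\<in>{0..T}. y t = y 0 + (LINT s:{0..t}|lborel. y' s))"

definition inX :: "real \<Rightarrow> (real \<Rightarrow> real^'ny) \<Rightarrow> (real \<Rightarrow> real^'ny) \<Rightarrow> (real \<Rightarrow> real^'nu) \<Rightarrow> bool" where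
  "inX T y y' u \<longleftrightarrow> weak_deriv T y y' \<and>
     u \<in> borel_measurable (restrict_space lborel {0..T}) \<and>
     esssup (restrict_space lborel {0..T}) (\<lambda>t. ereal (infnorm (u t))) < \<infinity>"

definition feasible ::
  "real \<Rightarrow> (real^'ny \<Rightarrow> real^'ny \<Rightarrow> real^'nb) \<Rightarrow> (real^'ny \<Rightarrow> real^'nu \<Rightarrow> real \<Rightarrow> real^'ny)
   \<Rightarrow> (real^'ny \<Rightarrow> real^'nu \<Rightarrow> real \<Rightarrow> real^'nc) \<Rightarrow> real^'ny \<Rightarrow> real^'ny \<Rightarrow> real^'nu \<Rightarrow> real^'nu
   \<Rightarrow> (real \<Rightarrow> real^'ny) \<Rightarrow> (real \<Rightarrow> real^'ny) \<Rightarrow> (real \<Rightarrow> real^'nu) \<Rightarrow> bool" where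
  "feasible T b f1 f2 yL yR uL uR y y' u \<longleftrightarrow>
     inX T y y' u \<and> b (y 0) (y T) = 0 \<and>
     (AE t in lborel. t \<in> {0..T} \<longrightarrow> y' t = f1 (y t) (u t) t \<and> f2 (y t) (u t) t = 0) \<and>
     (\<forall>t\<in>{0..T}. yL \<le> y t \<and> y t \<le> yR \<and> uL \<le> u t \<and> u t \<le> uR)"

definition local_min ::
  "real \<Rightarrow> (real^'ny \<Rightarrow> real^'ny \<Rightarrow> real) \<Rightarrow> (real^'ny \<Rightarrow> real^'ny \<Rightarrow> real^'nb)
   \<Rightarrow> (real^'ny \<Rightarrow> real^'nu \<Rightarrow> real \<Rightarrow> real^'ny)
   \<Rightarrow> (real^'ny \<Rightarrow> real^'nu \<Rightarrow> real \<Rightarrow> real^'nc) \<Rightarrow> real^'ny \<Rightarrow> real^'ny \<Rightarrow> real^'nu \<Rightarrow> real^'nu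
   \<Rightarrow> (real \<Rightarrow> real^'ny) \<Rightarrow> (real \<Rightarrow> real^'ny) \<Rightarrow> (real \<Rightarrow> real^'nu) \<Rightarrow> bool" where
  "local_min T M b f1 f2 yL yR uL uR ys ys' us \<longleftrightarrow>
     feasible T b f1 f2 yL yR uL uR ys ys' us \<and>
     (\<exists>\<delta>>0. \<forall>y y' u. feasible T b f1 f2 yL yR uL uR y y' u \<and>
        Xnorm T (\<lambda>t. ys t - y t) (\<lambda>t. ys' t - y' t) (\<lambda>t. us t - u t) < ereal \<delta>
        \<longrightarrow> M (ys 0) (ys T) \<le> M (y 0) (y T))"

text \<open>Mesh 0 = t_1 < ... < t_{N+1} = T (1-indexed) and its size h.\<close>
definition is_mesh :: "real \<Rightarrow> nat \<Rightarrow> (nat \<Rightarrow> real) \<Rightarrow> bool" where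
  "is_mesh T N tm \<longleftrightarrow> N \<ge> 1 \<and> tm 1 = 0 \<and> tm (N + 1) = T \<and> (\<forall>i\<in>{1..N}. tm i < tm (Suc i))"

definition mesh_size :: "nat \<Rightarrow> (nat \<Rightarrow> real) \<Rightarrow> real" where
  "mesh_size N tm = Max ((\<lambda>i. tm (Suc i) - tm i) ` {1..N})"

definition poly_on :: "real set \<Rightarrow> nat \<Rightarrow> (real \<Rightarrow> real^'n) \<Rightarrow> bool" where
  "poly_on A d v \<longleftrightarrow> (\<exists>c :: nat \<Rightarrow> real^'n. \<forall>t\<in>A. v t = (\<Sum>k\<le>d. t ^ k *\<^sub>R c k))"

definition X_hp :: "real \<Rightarrow> nat \<Rightarrow> (nat \<Rightarrow> real) \<Rightarrow> nat \<Rightarrow> (real \<Rightarrow> real^'ny) \<Rightarrow> (real \<Rightarrow> real^'nu) \<Rightarrow> bool" where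
  "X_hp T N tm p y u \<longleftrightarrow> continuous_on {0..T} y \<and>
     (\<forall>i\<in>{1..N}. poly_on {tm i..tm (Suc i)} p y) \<and>
     (\<forall>i\<in>{1..N}. poly_on ({tm i..<tm (Suc i)} \<union> (if i = N then {T} else {})) (p - 1) u)"

definition B_hp :: "real \<Rightarrow> nat \<Rightarrow> (nat \<Rightarrow> real) \<Rightarrow> nat \<Rightarrow> real set \<Rightarrow> real^'ny \<Rightarrow> real^'ny \<Rightarrow> real^'nu \<Rightarrow> real^'nu
   \<Rightarrow> (real \<Rightarrow> real^'ny) \<Rightarrow> (real \<Rightarrow> real^'nu) \<Rightarrow> bool" where
  "B_hp T N tm p S yL yR uL uR y u \<longleftrightarrow> X_hp T N tm p y u \<and>
     (\<forall>s\<in>S. yL \<le> y s \<and> y s \<le> yR \<and> uL \<le> u s \<and> u s \<le> uR)"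

definition residual_sq ::
  "real \<Rightarrow> (real^'ny \<Rightarrow> real^'ny \<Rightarrow> real^'nb) \<Rightarrow> (real^'ny \<Rightarrow> real^'nu \<Rightarrow> real \<Rightarrow> real^'ny)
   \<Rightarrow> (real^'ny \<Rightarrow> real^'nu \<Rightarrow> real \<Rightarrow> real^'nc)
   \<Rightarrow> (real \<Rightarrow> real^'ny) \<Rightarrow> (real \<Rightarrow> real^'ny) \<Rightarrow> (real \<Rightarrow> real^'nu) \<Rightarrow> ennreal" where
  "residual_sq T b f1 f2 y y' u =
     (\<integral>\<^sup>+ t\<in>{0..T}. ennreal ((norm (f1 (y t) (u t) t - y' t, f2 (y t) (u t) t))\<^sup>2) \<partial>lborel)
     + ennreal ((norm (b (y 0) (y T)))\<^sup>2)"

end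

theory Submission
  imports Defs
begin

text \<open>Let \<open>\<delta> = C\<^sub>\<eta> h\<^sup>\<eta>\<close> bound the \<open>\<X>\<close>-distance between the exact and the approximate
 solution, and \<open>K = sqrt (n\<^sub>y + n\<^sub>u)\<close>. The sup-norm part keeps \<open>(y\<^sub>h, u\<^sub>h)\<close> within \<open>K \<delta>\<close>
 of \<open>(y\<^sup>\<star>, u\<^sup>\<star>)\<close> almost everywhere, and by continuity of both states also at the end
 points. Since the exact solution has zero residual, the Hoelder bounds (A.3) make the
 algebraic and boundary defects of \<open>(y\<^sub>h, u\<^sub>h)\<close> at most \<open>C\<^sub>\<lambda> (2 K \<delta>)\<^sup>\<lambda>\<close>, while the
 derivative defect is the \<open>L\<^sup>2\<close> part, at most \<open>\<delta>\<close>. Squaring and integrating gives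
 \<open>r\<^sup>2 \<le> (2 T + 1) C\<^sub>\<lambda>\<^sup>2 (2 K \<delta>)\<^bsup>2\<lambda>\<^esup> + 2 \<delta>\<^sup>2\<close>, which is \<open>O(\<delta>\<^bsup>2\<lambda>\<^esup>) = O(h\<^bsup>2\<lambda>\<eta>\<^esup>)\<close>
 as soon as \<open>\<delta> \<le> 1\<close>.\<close>

lemma set_integrable_if_L2sq_finite:
  fixes v :: "real \<Rightarrow> 'a::{banach, second_countable_topology}"
  assumes meas: "v \<in> borel_measurable (restrict_space lborel {0..T})" and fin: "L2sq T v < \<infinity>"
  shows "set_integrable lborel {0..T} v"
  unfolding set_integrable_def
proof (rule integrableI_bounded)
  show "(\<lambda>t. indicator {0..T} t *\<^sub>R v t) \<in> borel_measurable lborel"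
    using meas by (simp add: borel_measurable_restrict_space_iff)
  have sq_meas: "(\<lambda>t. ennreal ((norm (v t))\<^sup>2) * indicator {0..T} t) \<in> borel_measurable lborel"
    using meas by (subst borel_measurable_restrict_space_iff_ennreal[symmetric]) auto
  have "(\<integral>\<^sup>+ t. ennreal (norm (indicator {0..T} t *\<^sub>R v t)) \<partial>lborel)
      \<le> (\<integral>\<^sup>+ t. indicator {0..T} t + ennreal ((norm (v t))\<^sup>2) * indicator {0..T} t \<partial>lborel)"
  proof (rule nn_integral_mono)
    fix t
    have "2 * norm (v t) \<le> 1 + (norm (v t))\<^sup>2"
      using zero_le_power2[of "norm (v t) - 1"] by (simp add: power2_eq_square algebra_simps)
    then have "norm (v t) \<le> 1 + (norm (v t))\<^sup>2"
      using norm_ge_zero[of "v t"] by linarith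
    then have "ennreal (norm (v t)) \<le> ennreal (1 + (norm (v t))\<^sup>2)"
      by (rule ennreal_leI)
    also have "\<dots> = 1 + ennreal ((norm (v t))\<^sup>2)"
      by (subst ennreal_plus) auto
    finally have "ennreal (norm (v t)) \<le> 1 + ennreal ((norm (v t))\<^sup>2)" .
    then show "ennreal (norm (indicator {0..T} t *\<^sub>R v t))
        \<le> indicator {0..T} t + ennreal ((norm (v t))\<^sup>2) * indicator {0..T} t"
      by (cases "t \<in> {0..T}") auto
  qed
  also have "\<dots> = emeasure lborel {0..T} + L2sq T v"
    unfolding L2sq_def using sq_meas by (subst nn_integral_add) auto
  also have "\<dots> < \<infinity>"
    using fin by (simp add: emeasure_lborel_Icc_eq less_top)
  finally show "(\<integral>\<^sup>+ t. ennreal (norm (indicator {0..T} t *\<^sub>R v t)) \<partial>lborel) < \<infinity>" .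
qed

lemma weak_deriv_continuous_on:
  assumes "weak_deriv T y y'"
  shows "continuous_on {0..T} y"
proof -
  have int: "set_integrable lborel {0..T} y'"
    using assms unfolding weak_deriv_def by (blast intro: set_integrable_if_L2sq_finite)
  have "y' integrable_on {0..T}"
    using int by (rule set_borel_integral_eq_integral(1))
  then have "continuous_on {0..T} (\<lambda>t. y 0 + integral {0..t} y')"
    by (intro continuous_on_add continuous_on_const indefinite_integral_continuous_1)
  moreover have "y 0 + integral {0..t} y' = y t" if "t \<in> {0..T}" for t
  proof -
    have "set_integrable lborel {0..t} y'"
      by (rule set_integrable_subset[OF int]) (use that in auto)
    then have "(LINT s:{0..t}|lborel. y' s) = integral {0..t} y'"
      by (rule set_borel_integral_eq_integral(2))
    moreover have "y t = y 0 + (LINT s:{0..t}|lborel. y' s)"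
      using assms that unfolding weak_deriv_def by blast
    ultimately show ?thesis
      by simp
  qed
  ultimately show ?thesis
    by (rule continuous_on_eq)
qed

lemma continuous_on_le_if_AE_le:
  fixes g :: "real \<Rightarrow> real"
  assumes cont: "continuous_on {a..b} g" and "a < b"
    and AE_le: "AE t in lborel. t \<in> {a..b} \<longrightarrow> g t \<le> c" and t0: "t0 \<in> {a..b}"
  shows "g t0 \<le> c"
proof (rule ccontr)
  assume "\<not> g t0 \<le> c"
  then have "g t0 - c > 0"
    by simp
  then obtain r where "r > 0" and r: "\<forall>t\<in>{a..b}. dist t t0 < r \<longrightarrow> dist (g t) (g t0) < g t0 - c"
    using cont t0 unfolding continuous_on_iff by blast
  define I where "I = {max a (t0 - r)<..<min b (t0 + r)}"
  have nonempty: "max a (t0 - r) < min b (t0 + r)"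
    using \<open>r > 0\<close> \<open>a < b\<close> t0 by auto
  have outside: "t \<in> {a..b} \<and> \<not> g t \<le> c" if "t \<in> I" for t
  proof -
    have "t \<in> {a..b}" and "dist t t0 < r"
      using that unfolding I_def dist_real_def by auto
    then have "dist (g t) (g t0) < g t0 - c"
      using r by blast
    then show ?thesis
      using \<open>t \<in> {a..b}\<close> unfolding dist_real_def by auto
  qed
  have "AE t in lborel. t \<notin> I"
    using AE_le by eventually_elim (use outside in auto)
  then have "emeasure lborel I = 0"
    unfolding I_def by (subst (asm) AE_iff_measurable) auto
  moreover have "emeasure lborel I = ennreal (min b (t0 + r) - max a (t0 - r))"
    using nonempty unfolding I_def by simp
  ultimately have "min b (t0 + r) - max a (t0 - r) \<le> 0"
    by (simp add: ennreal_eq_0_iff)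
  then show False
    using nonempty by linarith
qed

lemma L2norm_nonneg: "0 \<le> L2norm T v"
  unfolding L2norm_def by simp

lemma Linf_yu_nonneg:
  assumes "T > 0"
  shows "0 \<le> Linf_yu T y u"
proof -
  have "emeasure (restrict_space lborel {0..T}) (space (restrict_space lborel {0..T})) \<noteq> 0"
    using assms by (simp add: emeasure_restrict_space space_restrict_space)
  then have "0 = esssup (restrict_space lborel {0..T}) (\<lambda>_. 0::ereal)"
    by (simp add: esssup_const)
  also have "\<dots> \<le> Linf_yu T y u"
    unfolding Linf_yu_def by (rule esssup_mono) (auto simp: infnorm_pos_le)
  finally show ?thesis .
qed

lemma L2sq_le_if_L2norm_le:
  assumes "L2norm T v \<le> ereal \<delta>"
  shows "L2sq T v \<le> ennreal (\<delta>\<^sup>2)"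
proof -
  have finite: "L2sq T v \<noteq> \<infinity>"
    using assms by (auto simp: L2norm_def)
  then have "sqrt (enn2real (L2sq T v)) \<le> \<delta>"
    using assms by (simp add: L2norm_def)
  then have "enn2real (L2sq T v) \<le> \<delta>\<^sup>2"
    by (simp add: sqrt_le_D)
  then have "ennreal (enn2real (L2sq T v)) \<le> ennreal (\<delta>\<^sup>2)"
    by (rule ennreal_leI)
  then show ?thesis
    using finite by (simp add: ennreal_enn2real_if)
qed

lemma AE_norm_le_if_Linf_yu_le:
  fixes y :: "real \<Rightarrow> real^'ny" and u :: "real \<Rightarrow> real^'nu"
  assumes "Linf_yu T y u \<le> ereal \<delta>"
  shows "AE t in lborel. t \<in> {0..T} \<longrightarrow> norm (y t, u t) \<le> sqrt DIM((real^'ny) \<times> (real^'nu)) * \<delta>"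
proof -
  have "AE t in restrict_space lborel {0..T}. ereal (infnorm (y t, u t)) \<le> Linf_yu T y u"
    unfolding Linf_yu_def by (rule esssup_AE)
  then have "AE t in restrict_space lborel {0..T}.
      norm (y t, u t) \<le> sqrt DIM((real^'ny) \<times> (real^'nu)) * \<delta>"
  proof eventually_elim
    case (elim t)
    then have "infnorm (y t, u t) \<le> \<delta>"
      using assms by (metis ereal_less_eq(3) order_trans)
    then have "sqrt DIM((real^'ny) \<times> (real^'nu)) * infnorm (y t, u t)
        \<le> sqrt DIM((real^'ny) \<times> (real^'nu)) * \<delta>"
      by (intro mult_left_mono) auto
    then show ?case
      using norm_le_infnorm order_trans by blast
  qed
  then show ?thesis
    by (simp add: AE_restrict_space_iff)
qed

lemma sq_le_if_le_add:
  fixes x a c :: real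
  assumes "0 \<le> x" "x \<le> a + c"
  shows "x\<^sup>2 \<le> 2 * c\<^sup>2 + 2 * a\<^sup>2"
proof -
  have "x\<^sup>2 \<le> (a + c)\<^sup>2"
    using assms by (intro power_mono) auto
  also have "\<dots> \<le> 2 * c\<^sup>2 + 2 * a\<^sup>2"
    using zero_le_power2[of "a - c"] by (simp add: power2_eq_square algebra_simps)
  finally show ?thesis .
qed

lemma L2sq_le_if_AE_norm_le_add:
  fixes g :: "real \<Rightarrow> 'a::real_normed_vector" and e :: "real \<Rightarrow> 'b::real_normed_vector"
  assumes "T \<ge> 0" and e_meas: "e \<in> borel_measurable (restrict_space lborel {0..T})"
    and le: "AE t in lborel. t \<in> {0..T} \<longrightarrow> norm (g t) \<le> norm (e t) + c"
  shows "L2sq T g \<le> ennreal (2 * c\<^sup>2 * T) + 2 * L2sq T e"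
proof -
  have e_sq_meas: "(\<lambda>t. ennreal ((norm (e t))\<^sup>2) * indicator {0..T} t) \<in> borel_measurable lborel"
    using e_meas by (subst borel_measurable_restrict_space_iff_ennreal[symmetric]) auto
  have "L2sq T g \<le> (\<integral>\<^sup>+ t. ennreal (2 * c\<^sup>2) * indicator {0..T} t
      + 2 * (ennreal ((norm (e t))\<^sup>2) * indicator {0..T} t) \<partial>lborel)"
    unfolding L2sq_def using le
  proof (intro nn_integral_mono_AE, eventually_elim)
    case (elim t)
    show ?case
    proof (cases "t \<in> {0..T}")
      case True
      then have "ennreal ((norm (g t))\<^sup>2) \<le> ennreal (2 * c\<^sup>2 + 2 * (norm (e t))\<^sup>2)"
        using elim by (intro ennreal_leI sq_le_if_le_add) auto
      also have "\<dots> = ennreal (2 * c\<^sup>2) + 2 * ennreal ((norm (e t))\<^sup>2)"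
        by (subst ennreal_plus) (auto simp: ennreal_mult)
      finally show ?thesis
        using True by simp
    qed simp
  qed
  also have "\<dots> = ennreal (2 * c\<^sup>2) * emeasure lborel {0..T} + 2 * L2sq T e"
    unfolding L2sq_def using e_sq_meas by (simp add: nn_integral_add nn_integral_cmult)
  also have "\<dots> = ennreal (2 * c\<^sup>2 * T) + 2 * L2sq T e"
    using \<open>T \<ge> 0\<close> by (simp add: ennreal_mult)
  finally show ?thesis .
qed

lemma norm_endpoints_le_if_AE_norm_le:
  fixes z :: "real \<Rightarrow> 'a::real_normed_vector"
  assumes "T > 0" and "continuous_on {0..T} z"
    and "AE t in lborel. t \<in> {0..T} \<longrightarrow> norm (z t) \<le> r"
  shows "norm (z 0, z T) \<le> 2 * r"
proof -
  have "norm (z t) \<le> r" if "t \<in> {0..T}" for t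
    using assms that by (intro continuous_on_le_if_AE_le[where g = "\<lambda>t. norm (z t)"] continuous_on_norm) auto
  then have "norm (z 0) \<le> r" "norm (z T) \<le> r"
    using \<open>T > 0\<close> by auto
  then show ?thesis
    using norm_Pair_le[of "z 0" "z T"] by linarith
qed

lemma norm_Pair_le_perturbation:
  fixes x y p p0 :: "'a::real_normed_vector" and q q0 :: "'b::real_normed_vector"
  assumes "x = p0" "q0 = 0"
  shows "norm (p - y, q) \<le> norm (x - y) + norm (p0 - p, q0 - q)"
proof -
  have "(p - y, q) = (x - y, 0) - (p0 - p, q0 - q)"
    using assms by simp
  then show ?thesis
    using norm_triangle_ineq4[of "(x - y, 0::'b)" "(p0 - p, q0 - q)"] by (simp add: norm_Pair)
qed

lemma AE_norm_defect_le:
  fixes f1 :: "'y::real_normed_vector \<Rightarrow> 'u::real_normed_vector \<Rightarrow> real \<Rightarrow> 'y"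
    and f2 :: "'y \<Rightarrow> 'u \<Rightarrow> real \<Rightarrow> 'c::real_normed_vector"
    and ys ys' yh yh' :: "real \<Rightarrow> 'y" and us uh :: "real \<Rightarrow> 'u"
  assumes ode: "AE t in lborel. t \<in> {0..T} \<longrightarrow> ys' t = f1 (ys t) (us t) t \<and> f2 (ys t) (us t) t = 0"
    and close: "AE t in lborel. t \<in> {0..T} \<longrightarrow> norm (ys t - yh t, us t - uh t) \<le> \<rho>"
    and "\<rho> \<le> eps" "0 \<le> lam" "0 \<le> Clam"
    and f_holder: "\<forall>t\<in>{0..T}. \<forall>v w. norm (ys t - v, us t - w) \<le> eps \<longrightarrow>
                  norm (f1 (ys t) (us t) t - f1 v w t, f2 (ys t) (us t) t - f2 v w t)
                    \<le> Clam * norm (ys t - v, us t - w) powr lam"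
  shows "AE t in lborel. t \<in> {0..T} \<longrightarrow>
           norm (f1 (yh t) (uh t) t - yh' t, f2 (yh t) (uh t) t) \<le> norm (ys' t - yh' t) + Clam * \<rho> powr lam"
  using ode close
proof eventually_elim
  case (elim t)
  show ?case
  proof
    assume t: "t \<in> {0..T}"
    let ?d = "(f1 (ys t) (us t) t - f1 (yh t) (uh t) t, f2 (ys t) (us t) t - f2 (yh t) (uh t) t)"
    have dist: "norm (ys t - yh t, us t - uh t) \<le> \<rho>"
      using elim t by blast
    then have "norm ?d \<le> Clam * norm (ys t - yh t, us t - uh t) powr lam"
      using f_holder t \<open>\<rho> \<le> eps\<close> by auto
    also have "\<dots> \<le> Clam * \<rho> powr lam"
      using dist \<open>0 \<le> lam\<close> \<open>0 \<le> Clam\<close> by (intro mult_left_mono powr_mono2) auto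
    finally have "norm ?d \<le> Clam * \<rho> powr lam" .
    moreover have "norm (f1 (yh t) (uh t) t - yh' t, f2 (yh t) (uh t) t) \<le> norm (ys' t - yh' t) + norm ?d"
      using elim t by (intro norm_Pair_le_perturbation) auto
    ultimately show "norm (f1 (yh t) (uh t) t - yh' t, f2 (yh t) (uh t) t)
        \<le> norm (ys' t - yh' t) + Clam * \<rho> powr lam"
      by linarith
  qed
qed

lemma residual_sq_le_if_close:
  fixes b :: "real^'ny \<Rightarrow> real^'ny \<Rightarrow> real^'nb"
    and f1 :: "real^'ny \<Rightarrow> real^'nu \<Rightarrow> real \<Rightarrow> real^'ny"
    and f2 :: "real^'ny \<Rightarrow> real^'nu \<Rightarrow> real \<Rightarrow> real^'nc"
    and ys ys' yh yh' :: "real \<Rightarrow> real^'ny" and us uh :: "real \<Rightarrow> real^'nu"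
  assumes "T > 0"
    and feas: "feasible T b f1 f2 yL yR uL uR ys ys' us"
    and yh_cont: "continuous_on {0..T} yh"
    and yh'_meas: "yh' \<in> borel_measurable (restrict_space lborel {0..T})"
    and close: "AE t in lborel. t \<in> {0..T} \<longrightarrow> norm (ys t - yh t, us t - uh t) \<le> \<rho>"
    and L2_close: "L2sq T (\<lambda>t. ys' t - yh' t) \<le> ennreal (\<sigma>\<^sup>2)"
    and "0 \<le> \<rho>" "2 * \<rho> \<le> eps" "0 \<le> lam" "0 \<le> Clam"
    and b_holder: "\<forall>a a'. norm (ys 0 - a, ys T - a') \<le> eps \<longrightarrow>
                  norm (b (ys 0) (ys T) - b a a') \<le> Clam * norm (ys 0 - a, ys T - a') powr lam"
    and f_holder: "\<forall>t\<in>{0..T}. \<forall>v w. norm (ys t - v, us t - w) \<le> eps \<longrightarrow>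
                  norm (f1 (ys t) (us t) t - f1 v w t, f2 (ys t) (us t) t - f2 v w t)
                    \<le> Clam * norm (ys t - v, us t - w) powr lam"
  shows "residual_sq T b f1 f2 yh yh' uh
           \<le> ennreal ((2 * T + 1) * (Clam * (2 * \<rho>) powr lam)\<^sup>2 + 2 * \<sigma>\<^sup>2)"
proof -
  define c where "c = Clam * (2 * \<rho>) powr lam"
  have ys_deriv: "weak_deriv T ys ys'" and "b (ys 0) (ys T) = 0"
    and ode: "AE t in lborel. t \<in> {0..T} \<longrightarrow> ys' t = f1 (ys t) (us t) t \<and> f2 (ys t) (us t) t = 0"
    using feas unfolding feasible_def inX_def by auto
  have "AE t in lborel. t \<in> {0..T} \<longrightarrow> norm (ys t - yh t) \<le> \<rho>"
    using close by eventually_elim (use norm_fst_le order_trans in blast)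
  then have "norm (ys 0 - yh 0, ys T - yh T) \<le> 2 * \<rho>"
    using \<open>T > 0\<close> weak_deriv_continuous_on[OF ys_deriv] yh_cont
    by (intro norm_endpoints_le_if_AE_norm_le[where z = "\<lambda>t. ys t - yh t"] continuous_on_diff)
  then have "Clam * norm (ys 0 - yh 0, ys T - yh T) powr lam \<le> c"
    and "norm (b (ys 0) (ys T) - b (yh 0) (yh T)) \<le> Clam * norm (ys 0 - yh 0, ys T - yh T) powr lam"
    unfolding c_def using assms by (auto intro!: mult_left_mono powr_mono2)
  then have "norm (b (yh 0) (yh T)) \<le> c"
    using \<open>b (ys 0) (ys T) = 0\<close> by simp
  then have boundary: "(norm (b (yh 0) (yh T)))\<^sup>2 \<le> c\<^sup>2"
    by (intro power_mono) auto
  have "AE t in lborel. t \<in> {0..T} \<longrightarrow> norm (ys t - yh t, us t - uh t) \<le> 2 * \<rho>"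
    using close by eventually_elim (use \<open>0 \<le> \<rho>\<close> in auto)
  then have "AE t in lborel. t \<in> {0..T} \<longrightarrow>
      norm (f1 (yh t) (uh t) t - yh' t, f2 (yh t) (uh t) t) \<le> norm (ys' t - yh' t) + c"
    unfolding c_def using assms by (intro AE_norm_defect_le[OF ode _ _ _ _ f_holder]) auto
  moreover have "(\<lambda>t. ys' t - yh' t) \<in> borel_measurable (restrict_space lborel {0..T})"
    using ys_deriv yh'_meas unfolding weak_deriv_def by auto
  ultimately have "L2sq T (\<lambda>t. (f1 (yh t) (uh t) t - yh' t, f2 (yh t) (uh t) t))
      \<le> ennreal (2 * c\<^sup>2 * T) + 2 * L2sq T (\<lambda>t. ys' t - yh' t)"
    using \<open>T > 0\<close> by (intro L2sq_le_if_AE_norm_le_add) auto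
  also have "\<dots> \<le> ennreal (2 * c\<^sup>2 * T) + 2 * ennreal (\<sigma>\<^sup>2)"
    using L2_close by (intro add_left_mono mult_left_mono) auto
  finally have interior: "L2sq T (\<lambda>t. (f1 (yh t) (uh t) t - yh' t, f2 (yh t) (uh t) t))
      \<le> ennreal (2 * c\<^sup>2 * T) + 2 * ennreal (\<sigma>\<^sup>2)" .
  have "residual_sq T b f1 f2 yh yh' uh
      = L2sq T (\<lambda>t. (f1 (yh t) (uh t) t - yh' t, f2 (yh t) (uh t) t))
        + ennreal ((norm (b (yh 0) (yh T)))\<^sup>2)"
    unfolding residual_sq_def L2sq_def ..
  also have "\<dots> \<le> ennreal (2 * c\<^sup>2 * T) + 2 * ennreal (\<sigma>\<^sup>2) + ennreal (c\<^sup>2)"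
    using interior boundary by (intro add_mono ennreal_leI) auto
  also have "\<dots> = ennreal (2 * c\<^sup>2 * T + 2 * \<sigma>\<^sup>2 + c\<^sup>2)"
    using \<open>T > 0\<close> by (simp add: ennreal_plus ennreal_mult)
  also have "2 * c\<^sup>2 * T + 2 * \<sigma>\<^sup>2 + c\<^sup>2 = (2 * T + 1) * c\<^sup>2 + 2 * \<sigma>\<^sup>2"
    by algebra
  finally show ?thesis
    unfolding c_def .
qed

lemma residual_sq_le_if_Xnorm_le:
  fixes b :: "real^'ny \<Rightarrow> real^'ny \<Rightarrow> real^'nb"
    and f1 :: "real^'ny \<Rightarrow> real^'nu \<Rightarrow> real \<Rightarrow> real^'ny"
    and f2 :: "real^'ny \<Rightarrow> real^'nu \<Rightarrow> real \<Rightarrow> real^'nc"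
    and ys ys' yh yh' :: "real \<Rightarrow> real^'ny" and us uh :: "real \<Rightarrow> real^'nu"
  defines "K \<equiv> sqrt DIM((real^'ny) \<times> (real^'nu))"
  assumes "T > 0"
    and feas: "feasible T b f1 f2 yL yR uL uR ys ys' us"
    and yh_cont: "continuous_on {0..T} yh"
    and yh_inX: "inX T yh yh' uh"
    and close: "Xnorm T (\<lambda>t. ys t - yh t) (\<lambda>t. ys' t - yh' t) (\<lambda>t. us t - uh t) \<le> ereal \<delta>"
    and "0 < \<delta>" "\<delta> \<le> 1" "2 * K * \<delta> \<le> eps" "0 < lam" "lam \<le> 1" "0 \<le> Clam"
    and b_holder: "\<forall>a a'. norm (ys 0 - a, ys T - a') \<le> eps \<longrightarrow>
                  norm (b (ys 0) (ys T) - b a a') \<le> Clam * norm (ys 0 - a, ys T - a') powr lam"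
    and f_holder: "\<forall>t\<in>{0..T}. \<forall>v w. norm (ys t - v, us t - w) \<le> eps \<longrightarrow>
                  norm (f1 (ys t) (us t) t - f1 v w t, f2 (ys t) (us t) t - f2 v w t)
                    \<le> Clam * norm (ys t - v, us t - w) powr lam"
  shows "residual_sq T b f1 f2 yh yh' uh
           \<le> ennreal (((2 * T + 1) * Clam\<^sup>2 * (2 * K) powr (2 * lam) + 2) * \<delta> powr (2 * lam))"
proof -
  have "K > 0"
    unfolding K_def by (simp add: add_pos_pos)
  have "L2norm T (\<lambda>t. ys' t - yh' t) \<le> ereal \<delta>"
    using add_increasing2[OF Linf_yu_nonneg[OF \<open>T > 0\<close>] order_refl] close[unfolded Xnorm_def]
    by (rule order_trans)
  then have L2_close: "L2sq T (\<lambda>t. ys' t - yh' t) \<le> ennreal (\<delta>\<^sup>2)"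
    by (rule L2sq_le_if_L2norm_le)
  have "Linf_yu T (\<lambda>t. ys t - yh t) (\<lambda>t. us t - uh t) \<le> ereal \<delta>"
    using add_increasing[OF L2norm_nonneg order_refl] close[unfolded Xnorm_def]
    by (rule order_trans)
  then have "AE t in lborel. t \<in> {0..T} \<longrightarrow> norm (ys t - yh t, us t - uh t) \<le> K * \<delta>"
    unfolding K_def by (rule AE_norm_le_if_Linf_yu_le)
  moreover have "yh' \<in> borel_measurable (restrict_space lborel {0..T})"
    using yh_inX unfolding inX_def weak_deriv_def by blast
  ultimately have "residual_sq T b f1 f2 yh yh' uh
      \<le> ennreal ((2 * T + 1) * (Clam * (2 * (K * \<delta>)) powr lam)\<^sup>2 + 2 * \<delta>\<^sup>2)"
    using L2_close \<open>K > 0\<close> \<open>0 < \<delta>\<close> \<open>2 * K * \<delta> \<le> eps\<close> \<open>0 < lam\<close> \<open>0 \<le> Clam\<close>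
    by (intro residual_sq_le_if_close[OF \<open>T > 0\<close> feas yh_cont _ _ _ _ _ _ _ b_holder f_holder])
      (auto simp: mult.assoc)
  also have "\<dots> \<le> ennreal (((2 * T + 1) * Clam\<^sup>2 * (2 * K) powr (2 * lam) + 2) * \<delta> powr (2 * lam))"
  proof (rule ennreal_leI)
    have "(Clam * (2 * (K * \<delta>)) powr lam)\<^sup>2 = Clam\<^sup>2 * (2 * K * \<delta>) powr (2 * lam)"
      using \<open>K > 0\<close> \<open>0 < \<delta>\<close> by (simp add: power_mult_distrib powr_power mult.assoc)
    also have "\<dots> = Clam\<^sup>2 * (2 * K) powr (2 * lam) * \<delta> powr (2 * lam)"
      using \<open>K > 0\<close> \<open>0 < \<delta>\<close> by (simp add: powr_mult)
    finally have "(Clam * (2 * (K * \<delta>)) powr lam)\<^sup>2 = Clam\<^sup>2 * (2 * K) powr (2 * lam) * \<delta> powr (2 * lam)" .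
    moreover have "\<delta> powr 2 \<le> \<delta> powr (2 * lam)"
      using \<open>0 < \<delta>\<close> \<open>\<delta> \<le> 1\<close> \<open>lam \<le> 1\<close> by (intro powr_mono') auto
    then have "\<delta>\<^sup>2 \<le> \<delta> powr (2 * lam)"
      using \<open>0 < \<delta>\<close> by simp
    ultimately show "(2 * T + 1) * (Clam * (2 * (K * \<delta>)) powr lam)\<^sup>2 + 2 * \<delta>\<^sup>2
        \<le> ((2 * T + 1) * Clam\<^sup>2 * (2 * K) powr (2 * lam) + 2) * \<delta> powr (2 * lam)"
      by (simp add: distrib_right mult.assoc)
  qed
  finally show ?thesis .
qed

lemma exists_interval_powr_le:
  fixes C \<eta> m h0 :: real
  assumes "0 < C" "0 < \<eta>" "0 < m" "0 < h0"
  shows "\<exists>h1\<in>{0<..h0}. \<forall>h\<in>{0<..h1}. C * h powr \<eta> \<le> m"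
proof
  define h1 where "h1 = min h0 ((m / C) powr (1 / \<eta>))"
  show "h1 \<in> {0<..h0}"
    using assms unfolding h1_def by auto
  show "\<forall>h\<in>{0<..h1}. C * h powr \<eta> \<le> m"
  proof
    fix h assume "h \<in> {0<..h1}"
    then have "h powr \<eta> \<le> ((m / C) powr (1 / \<eta>)) powr \<eta>"
      using assms unfolding h1_def by (intro powr_mono2) auto
    also have "\<dots> = m / C"
      using assms by (simp add: powr_powr)
    finally show "C * h powr \<eta> \<le> m"
      using assms by (simp add: field_simps)
  qed
qed

theorem mainTheorem18:
  fixes T :: real
    and M :: "real^'ny \<Rightarrow> real^'ny \<Rightarrow> real"
    and b :: "real^'ny \<Rightarrow> real^'ny \<Rightarrow> real^'nb"
    and f1 :: "real^'ny \<Rightarrow> real^'nu \<Rightarrow> real \<Rightarrow> real^'ny"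
    and f2 :: "real^'ny \<Rightarrow> real^'nu \<Rightarrow> real \<Rightarrow> real^'nc"
    and yL yR :: "real^'ny" and uL uR :: "real^'nu"
    and p :: nat
    and ys ys' :: "real \<Rightarrow> real^'ny" and us :: "real \<Rightarrow> real^'nu"
    and Nm :: "real \<Rightarrow> nat" and tm :: "real \<Rightarrow> nat \<Rightarrow> real" and S :: "real \<Rightarrow> real set"
    and h0 eta Ceta :: real
    and yh yh' :: "real \<Rightarrow> real \<Rightarrow> real^'ny" and uh :: "real \<Rightarrow> real \<Rightarrow> real^'nu"
    and lam Clam eps :: real
  assumes "T > 0" and "yL \<le> yR" and "uL \<le> uR" and "p \<ge> 1"
    and locmin: "local_min T M b f1 f2 yL yR uL uR ys ys' us"
    and "h0 > 0" and "eta > 0" and "Ceta > 0"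
    and meshes: "\<forall>h\<in>{0<..h0}. is_mesh T (Nm h) (tm h) \<and> mesh_size (Nm h) (tm h) = h \<and> S h \<subseteq> {0..T}"
    and approx: "\<forall>h\<in>{0<..h0}. B_hp T (Nm h) (tm h) p (S h) yL yR uL uR (yh h) (uh h) \<and>
                   inX T (yh h) (yh' h) (uh h) \<and>
                   Xnorm T (\<lambda>t. ys t - yh h t) (\<lambda>t. ys' t - yh' h t) (\<lambda>t. us t - uh h t)
                     \<le> ereal (Ceta * h powr eta)"
    and A3_params: "0 < lam" "lam \<le> 1" "Clam > 0" "eps > 0"
    and A3_bd: "\<forall>a a'. norm (ys 0 - a, ys T - a') \<le> eps \<longrightarrow>
                  \<bar>M (ys 0) (ys T) - M a a'\<bar> \<le> Clam * norm (ys 0 - a, ys T - a') powr lam \<and>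
                  norm (b (ys 0) (ys T) - b a a') \<le> Clam * norm (ys 0 - a, ys T - a') powr lam"
    and A3_f: "\<forall>t\<in>{0..T}. \<forall>v w. norm (ys t - v, us t - w) \<le> eps \<longrightarrow>
                  norm (f1 (ys t) (us t) t - f1 v w t, f2 (ys t) (us t) t - f2 v w t)
                    \<le> Clam * norm (ys t - v, us t - w) powr lam"
  shows "\<exists>Cr>0. \<exists>h1\<in>{0<..h0}. \<forall>h\<in>{0<..h1}.
           residual_sq T b f1 f2 (yh h) (yh' h) (uh h) \<le> ennreal (Cr * h powr (2 * lam * eta))"
proof -
  define K where "K = sqrt DIM((real^'ny) \<times> (real^'nu))"
  define C where "C = (2 * T + 1) * Clam\<^sup>2 * (2 * K) powr (2 * lam) + 2"
  have "(1::real) \<le> real CARD('ny)"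
    by simp
  then have "K \<ge> 1"
    unfolding K_def by (simp add: add_increasing2)
  then obtain h1 where h1: "h1 \<in> {0<..h0}"
    and small: "\<forall>h\<in>{0<..h1}. Ceta * h powr eta \<le> min 1 (eps / (2 * K))"
    using exists_interval_powr_le[of Ceta eta "min 1 (eps / (2 * K))" h0] assms by auto
  have feas: "feasible T b f1 f2 yL yR uL uR ys ys' us"
    using locmin unfolding local_min_def by blast
  have b_holder: "\<forall>a a'. norm (ys 0 - a, ys T - a') \<le> eps \<longrightarrow>
      norm (b (ys 0) (ys T) - b a a') \<le> Clam * norm (ys 0 - a, ys T - a') powr lam"
    using A3_bd by blast
  have "residual_sq T b f1 f2 (yh h) (yh' h) (uh h)
      \<le> ennreal ((C * Ceta powr (2 * lam)) * h powr (2 * lam * eta))" if h: "h \<in> {0<..h1}" for h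
  proof -
    have "h \<in> {0<..h0}" and "Ceta * h powr eta \<le> 1" and "2 * K * (Ceta * h powr eta) \<le> eps"
      using h h1 small \<open>K \<ge> 1\<close> by (auto simp: field_simps)
    moreover from this(1) have "continuous_on {0..T} (yh h)"
      using approx unfolding B_hp_def X_hp_def by blast
    ultimately have "residual_sq T b f1 f2 (yh h) (yh' h) (uh h)
        \<le> ennreal (C * (Ceta * h powr eta) powr (2 * lam))"
      unfolding C_def K_def using approx h A3_params \<open>Ceta > 0\<close>
      by (intro residual_sq_le_if_Xnorm_le[OF \<open>T > 0\<close> feas _ _ _ _ _ _ _ _ _ b_holder A3_f]) auto
    also have "(Ceta * h powr eta) powr (2 * lam) = Ceta powr (2 * lam) * h powr (2 * lam * eta)"
      using h \<open>Ceta > 0\<close> by (simp add: powr_mult powr_powr mult_ac)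
    finally show ?thesis
      by (simp add: mult_ac)
  qed
  moreover have "C * Ceta powr (2 * lam) > 0"
    unfolding C_def using \<open>Ceta > 0\<close> \<open>T > 0\<close> by (simp add: add_nonneg_pos)
  ultimately show ?thesis
    using h1 by blast
qed

end
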